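(* For all integers $n\ge1$: (1) $\sum_{k=1}^{n}(F_{k+1}+F_{k-1})F_k^3=F_n^2F_{n+1}^2$; (2) $\sum_{k=1}^{n}(P_{k+1}+P_{k-1})P_k^3=\frac12P_n^2P_{n+1}^2$; (3) $\sum_{k=1}^{n}4^{n-k}(J_{k+1}+2J_{k-1})J_k^3=J_n^2J_{n+1}^2$; (4) $\sum_{k=1}^{n}4^{n-k}(2^k+1)(2^k-1)^3=\frac13(2^n-1)^2(2^{n+1}-1)^2$; (5) for $q\neq1$, $\sum_{k=1}^{n}q^{2(n-k)}\left(\frac{1-q^{2k}}{1-q^2}\right)\left(\frac{1-q^k}{1-q}\right)^2=\left[{n+1\atop 2}\right]_q^2$.
   Context: $F_n$ are the Fibonacci numbers ($F_0=0,F_1=1,F_{n+2}=F_{n+1}+F_n$); $P_n$ the Pell numbers ($P_0=0,P_1=1,P_{n+2}=2P_{n+1}+P_n$); $J_n$ the Jacobsthal numbers ($J_0=0,J_1=1,J_{n+2}=J_{n+1}+2J_n$). $\left[{n+1\atop 2}\right]_q=\frac{(1-q^{n})(1-q^{n+1})}{(1-q)(1-q^2)}$ is the Gaussian binomial coefficient. *)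

theory Defs
  imports Complex_Main "HOL-Number_Theory.Fib"
begin

fun pell :: "nat \<Rightarrow> nat" where
  "pell 0 = 0"
| "pell (Suc 0) = 1"
| "pell (Suc (Suc n)) = 2 * pell (Suc n) + pell n"

fun jacobsthal :: "nat \<Rightarrow> nat" where
  "jacobsthal 0 = 0"
| "jacobsthal (Suc 0) = 1"
| "jacobsthal (Suc (Suc n)) = jacobsthal (Suc n) + 2 * jacobsthal n"

text \<open>Gaussian binomial coefficient [n+1 choose 2]_q, as given in the paper.\<close>
definition gauss_binom2 :: "nat \<Rightarrow> real \<Rightarrow> real" where
  "gauss_binom2 n q = ((1 - q ^ n) * (1 - q ^ (n + 1))) / ((1 - q) * (1 - q ^ 2))"

end

theory Submission
  imports Defs
begin

text \<open>
  Let \<open>u 0 = 0\<close> and \<open>u (k+2) = a u (k+1) + b u k\<close>.  Then \<open>S n = u n\<^sup>2 u (n+1)\<^sup>2\<close> satisfies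
  \<open>S (n+1) - b\<^sup>2 S n = u (n+1)\<^sup>2 (u (n+2) - b u n) (u (n+2) + b u n) = a (u (n+2) + b u n) u (n+1)\<^sup>3\<close>,
  so \<open>S n\<close> is the \<open>b\<^sup>2\<close>-weighted sum of these increments.  Fibonacci, Pell and Jacobsthal
  numbers have \<open>(a, b) = (1, 1), (2, 1), (1, 2)\<close>, the numbers \<open>2\<^sup>k - 1\<close> have \<open>(3, -2)\<close>,
  and the \<open>q\<close>-integers \<open>[k]\<^sub>q = (1 - q\<^sup>k) / (1 - q)\<close> have \<open>(1 + q, -q)\<close>; finally
  \<open>[n+1 choose 2]\<^sub>q = [n]\<^sub>q [n+1]\<^sub>q / (1 + q)\<close>.
\<close>

lemma weighted_sum_eq_if_linear_recurrence:
  fixes c :: "'a::comm_semiring_1" and t S :: "nat \<Rightarrow> 'a"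
  assumes "S 0 = 0" and "\<And>n. S (Suc n) = c * S n + t (Suc n)"
  shows "(\<Sum>k=1..n. c ^ (n - k) * t k) = S n"
proof (induction n)
  case 0
  show ?case using assms(1) by simp
next
  case (Suc n)
  have "(\<Sum>k=1..n. c ^ (Suc n - k) * t k) = c * (\<Sum>k=1..n. c ^ (n - k) * t k)"
    by (simp add: sum_distrib_left Suc_diff_le mult.assoc)
  then show ?case using Suc assms(2) by simp
qed

lemma sum_cubes_second_order_recurrence:
  fixes u :: "nat \<Rightarrow> 'a::comm_ring_1"
  assumes "u 0 = 0" and rec: "\<And>k. u (k + 2) = a * u (k + 1) + b * u k"
  shows "a * (\<Sum>k=1..n. (b ^ 2) ^ (n - k) * ((u (k + 1) + b * u (k - 1)) * u k ^ 3))
    = u n ^ 2 * u (n + 1) ^ 2"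
proof -
  have "(\<Sum>k=1..n. (b ^ 2) ^ (n - k) * (a * (u (k + 1) + b * u (k - 1)) * u k ^ 3))
    = u n ^ 2 * u (n + 1) ^ 2"
  proof (rule weighted_sum_eq_if_linear_recurrence)
    fix n
    have "u (Suc n + 1) = a * u (n + 1) + b * u n"
      using rec[of n] by simp
    then show "u (Suc n) ^ 2 * u (Suc n + 1) ^ 2
      = b ^ 2 * (u n ^ 2 * u (n + 1) ^ 2)
        + a * (u (Suc n + 1) + b * u (Suc n - 1)) * u (Suc n) ^ 3"
      by (simp add: power2_eq_square power3_eq_cube algebra_simps)
  qed (simp add: assms(1))
  then show ?thesis
    by (simp add: sum_distrib_left mult.assoc mult.left_commute)
qed

lemma sum_fib_cubes:
  "(\<Sum>k=1..n. (fib (k + 1) + fib (k - 1)) * fib k ^ 3) = fib n ^ 2 * fib (n + 1) ^ 2"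
proof -
  have "1 * (\<Sum>k=1..n. (1 ^ 2) ^ (n - k) * ((int (fib (k + 1)) + 1 * int (fib (k - 1))) * int (fib k) ^ 3))
    = int (fib n) ^ 2 * int (fib (n + 1)) ^ 2"
    by (rule sum_cubes_second_order_recurrence) (simp_all add: numeral_2_eq_2)
  then have "int (\<Sum>k=1..n. (fib (k + 1) + fib (k - 1)) * fib k ^ 3) = int (fib n ^ 2 * fib (n + 1) ^ 2)"
    by simp
  then show ?thesis
    by (simp only: of_nat_eq_iff)
qed

lemma sum_pell_cubes:
  "(\<Sum>k=1..n. real ((pell (k + 1) + pell (k - 1)) * pell k ^ 3))
    = (1 / 2) * real (pell n ^ 2 * pell (n + 1) ^ 2)"
proof -
  have "2 * (\<Sum>k=1..n. (1 ^ 2) ^ (n - k) * ((real (pell (k + 1)) + 1 * real (pell (k - 1))) * real (pell k) ^ 3))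
    = real (pell n) ^ 2 * real (pell (n + 1)) ^ 2"
    by (rule sum_cubes_second_order_recurrence) (simp_all add: numeral_2_eq_2)
  then show ?thesis
    by simp
qed

lemma sum_jacobsthal_cubes:
  "(\<Sum>k=1..n. 4 ^ (n - k) * (jacobsthal (k + 1) + 2 * jacobsthal (k - 1)) * jacobsthal k ^ 3)
    = jacobsthal n ^ 2 * jacobsthal (n + 1) ^ 2"
proof -
  have "1 * (\<Sum>k=1..n. (2 ^ 2) ^ (n - k)
      * ((int (jacobsthal (k + 1)) + 2 * int (jacobsthal (k - 1))) * int (jacobsthal k) ^ 3))
    = int (jacobsthal n) ^ 2 * int (jacobsthal (n + 1)) ^ 2"
    by (rule sum_cubes_second_order_recurrence) (simp_all add: numeral_2_eq_2)
  then have "int (\<Sum>k=1..n. 4 ^ (n - k) * (jacobsthal (k + 1) + 2 * jacobsthal (k - 1)) * jacobsthal k ^ 3)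
    = int (jacobsthal n ^ 2 * jacobsthal (n + 1) ^ 2)"
    by (simp add: mult.assoc)
  then show ?thesis
    by (simp only: of_nat_eq_iff)
qed

lemma sum_mersenne_cubes:
  "(\<Sum>k=1..n. (4::real) ^ (n - k) * (2 ^ k + 1) * (2 ^ k - 1) ^ 3)
    = (1 / 3) * (2 ^ n - 1) ^ 2 * (2 ^ (n + 1) - 1) ^ 2"
proof -
  define u :: "nat \<Rightarrow> real" where "u k = 2 ^ k - 1" for k
  have "3 * (\<Sum>k=1..n. ((-2) ^ 2) ^ (n - k) * ((u (k + 1) + (-2) * u (k - 1)) * u k ^ 3))
    = u n ^ 2 * u (n + 1) ^ 2"
    by (rule sum_cubes_second_order_recurrence) (simp_all add: u_def algebra_simps)
  moreover have "u (k + 1) + (-2) * u (k - 1) = 2 ^ k + 1" if "k \<ge> 1" for k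
    using that by (cases k) (simp_all add: u_def)
  then have "(\<Sum>k=1..n. ((-2) ^ 2) ^ (n - k) * ((u (k + 1) + (-2) * u (k - 1)) * u k ^ 3))
    = (\<Sum>k=1..n. 4 ^ (n - k) * ((2 ^ k + 1) * u k ^ 3))"
    by (intro sum.cong) simp_all
  ultimately have "3 * (\<Sum>k=1..n. 4 ^ (n - k) * ((2 ^ k + 1) * u k ^ 3)) = u n ^ 2 * u (n + 1) ^ 2"
    by simp
  then show ?thesis
    by (simp add: u_def mult.assoc)
qed

definition q_int :: "'a::field \<Rightarrow> nat \<Rightarrow> 'a" where
  "q_int q k = (1 - q ^ k) / (1 - q)"

lemma q_int_Suc_Suc: "q_int q (k + 2) = (1 + q) * q_int q (k + 1) + (-q) * q_int q k"
  by (simp add: q_int_def add_divide_distrib diff_divide_distrib algebra_simps flip: times_divide_eq_right)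

lemma gauss_binom2_eq_q_int: "gauss_binom2 n q = q_int q n * q_int q (n + 1) / (1 + q)"
proof -
  have "(1 - q) * (1 - q ^ 2) = (1 - q) * (1 - q) * (1 + q)"
    by (simp add: power2_eq_square algebra_simps)
  then show ?thesis
    by (simp add: gauss_binom2_def q_int_def)
qed

lemma q_int_square_base:
  fixes q :: "'a::field"
  assumes "q \<noteq> 1" and "k \<ge> 1"
  shows "(1 - q ^ (2 * k)) / (1 - q ^ 2) = (q_int q (k + 1) + (-q) * q_int q (k - 1)) * q_int q k / (1 + q)"
proof -
  obtain m where k: "k = Suc m"
    using assms(2) by (cases k) auto
  have "q_int q (k + 1) + (-q) * q_int q (k - 1) = (1 - q ^ (k + 1) - q * (1 - q ^ (k - 1))) / (1 - q)"
    by (simp add: q_int_def diff_divide_distrib right_diff_distrib)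
  also have "\<dots> = (1 - q) * (1 + q ^ k) / (1 - q)"
    by (simp add: k algebra_simps)
  also have "\<dots> = 1 + q ^ k"
    using assms(1) by simp
  finally have "q_int q (k + 1) + (-q) * q_int q (k - 1) = 1 + q ^ k" .
  moreover have "1 - q ^ (2 * k) = (1 + q ^ k) * (1 - q ^ k)" and "1 - q ^ 2 = (1 - q) * (1 + q)"
    by (simp_all add: power_mult power2_eq_square algebra_simps)
  ultimately show ?thesis
    by (simp add: q_int_def)
qed

lemma sum_q_int_cubes:
  fixes q :: real
  assumes "q \<noteq> 1"
  shows "(\<Sum>k=1..n. q ^ (2 * (n - k)) * ((1 - q ^ (2 * k)) / (1 - q ^ 2)) * ((1 - q ^ k) / (1 - q)) ^ 2)
    = gauss_binom2 n q ^ 2"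
proof -
  let ?S = "\<Sum>k=1..n. ((-q) ^ 2) ^ (n - k) * ((q_int q (k + 1) + (-q) * q_int q (k - 1)) * q_int q k ^ 3)"
  have sum: "(1 + q) * ?S = q_int q n ^ 2 * q_int q (n + 1) ^ 2"
    by (rule sum_cubes_second_order_recurrence) (simp add: q_int_def, rule q_int_Suc_Suc)
  have "q ^ (2 * (n - k)) * ((1 - q ^ (2 * k)) / (1 - q ^ 2)) * ((1 - q ^ k) / (1 - q)) ^ 2
    = ((-q) ^ 2) ^ (n - k) * ((q_int q (k + 1) + (-q) * q_int q (k - 1)) * q_int q k ^ 3) / (1 + q)"
    if "k \<in> {1..n}" for k
  proof -
    have "(1 - q ^ k) / (1 - q) = q_int q k"
      by (simp add: q_int_def)
    moreover have "k \<ge> 1"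
      using that by simp
    ultimately show ?thesis
      unfolding q_int_square_base[OF assms \<open>k \<ge> 1\<close>]
      by (simp add: power_mult power3_eq_cube power2_eq_square)
  qed
  then have "(\<Sum>k=1..n. q ^ (2 * (n - k)) * ((1 - q ^ (2 * k)) / (1 - q ^ 2)) * ((1 - q ^ k) / (1 - q)) ^ 2)
    = ?S / (1 + q)"
    unfolding sum_divide_distrib by (rule sum.cong[OF refl])
  also have "\<dots> = (1 + q) * ?S / (1 + q) ^ 2"
    \<comment> \<open>also for \<open>q = -1\<close>, where both sides are divisions by zero\<close>
    by (cases "1 + q = 0") (simp_all add: power2_eq_square)
  also have "\<dots> = gauss_binom2 n q ^ 2"
    unfolding sum gauss_binom2_eq_q_int by (simp add: power_mult_distrib power_divide)
  finally show ?thesis .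
qed

theorem mainTheorem14:
  fixes n :: nat
  assumes "n \<ge> 1"
  shows "(\<Sum>k=1..n. (fib (k + 1) + fib (k - 1)) * fib k ^ 3) = fib n ^ 2 * fib (n + 1) ^ 2
    \<and> (\<Sum>k=1..n. real ((pell (k + 1) + pell (k - 1)) * pell k ^ 3))
        = (1 / 2) * real (pell n ^ 2 * pell (n + 1) ^ 2)
    \<and> (\<Sum>k=1..n. 4 ^ (n - k) * (jacobsthal (k + 1) + 2 * jacobsthal (k - 1)) * jacobsthal k ^ 3)
        = jacobsthal n ^ 2 * jacobsthal (n + 1) ^ 2
    \<and> (\<Sum>k=1..n. (4::real) ^ (n - k) * (2 ^ k + 1) * (2 ^ k - 1) ^ 3)
        = (1 / 3) * (2 ^ n - 1) ^ 2 * (2 ^ (n + 1) - 1) ^ 2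
    \<and> (\<forall>q::real. q \<noteq> 1 \<longrightarrow>
        (\<Sum>k=1..n. q ^ (2 * (n - k)) * ((1 - q ^ (2 * k)) / (1 - q ^ 2)) * ((1 - q ^ k) / (1 - q)) ^ 2)
        = (gauss_binom2 n q) ^ 2)"
  using sum_fib_cubes sum_pell_cubes sum_jacobsthal_cubes sum_mersenne_cubes sum_q_int_cubes
  by blast

end
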